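(* Let $\mathcal{O}$ be a nonempty set of quantum channels on $n$ qubits and $\Psi$ a channel on $n$ qubits with $\gamma(\Psi)<\infty$. Then for every sample $S=(z_1,\ldots,z_m)$ with $z_i\in\mathbb{F}_2^n\times\mathbb{F}_2^n$, \[ \hat{G}_S(\mathcal{F}(\mathcal{O}))\le\hat{G}_S(\mathcal{F}(\mathcal{O}\cup\{\Psi\}))\le(1+\gamma(\Psi))\,\hat{G}_S(\mathcal{F}(\mathcal{O})), \] and for every distribution $D$ on $\mathbb{F}_2^n\times\mathbb{F}_2^n$, $G_D(\mathcal{F}(\mathcal{O}))\le G_D(\mathcal{F}(\mathcal{O}\cup\{\Psi\}))\le(1+\gamma(\Psi))G_D(\mathcal{F}(\mathcal{O}))$.
   Context: A quantum channel on $n$ qubits is a completely positive trace-preserving linear map on $2^n\times2^n$ complex matrices. For a channel $\Phi$, $f_\Phi(x,y)=\mathrm{Tr}[\Phi(|x\rangle\langle x|)\,|y\rangle\langle y|]$; $\mathcal{F}(\Omega)=\{f_\Phi:\Phi\in\Omega\}$. Empirical Gaussian complexity: $\hat{G}_S(\mathcal{G})=\mathbb{E}_{g}[\sup_{h\in\mathcal{G}}\frac1m\sum_{i=1}^m g_i h(z_i)]$ with $g_1,\ldots,g_m$ i.i.d. $\mathcal{N}(0,1)$; $G_D(\mathcal{G})=\mathbb{E}_{S\sim D^m}\hat{G}_S(\mathcal{G})$. Free robustness w.r.t. $\mathcal{O}$: $\gamma(\Psi)=\inf\{\lambda\ge0:\exists\,\Phi\in\mathrm{Conv}(\mathcal{O}),\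 (\Psi+\lambda\Phi)/(1+\lambda)\in\mathrm{Conv}(\mathcal{O})\}$. *)

theory Defs
  imports "HOL-Probability.Probability"
begin

text \<open>Matrices of size d are encoded as functions nat => nat => complex; only the
entries with both indices < d are meaningful. A superoperator on n qubits is a map
on such matrices, considered on the block of size 2^n.\<close>

type_synonym cmat = "nat \<Rightarrow> nat \<Rightarrow> complex"
type_synonym superop = "cmat \<Rightarrow> cmat"

definition psd :: "nat \<Rightarrow> cmat \<Rightarrow> bool" where
  "psd d M \<longleftrightarrow> (\<forall>v :: nat \<Rightarrow> complex.
      (\<Sum>i<d. \<Sum>j<d. cnj (v i) * M i j * v j) \<in> \<real> \<and>
      0 \<le> Re (\<Sum>i<d. \<Sum>j<d. cnj (v i) * M i j * v j))"

text \<open>(id_k tensor Phi) applied to a (k*N)x(k*N) matrix, viewed as a k x k block matrix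
with N x N blocks.\<close>
definition id_tensor :: "nat \<Rightarrow> nat \<Rightarrow> superop \<Rightarrow> superop" where
  "id_tensor N k \<Phi> X = (\<lambda>r c. \<Phi> (\<lambda>i j. X ((r div N) * N + i) ((c div N) * N + j))
                                (r mod N) (c mod N))"

definition is_channel :: "nat \<Rightarrow> superop \<Rightarrow> bool" where
  "is_channel n \<Phi> \<longleftrightarrow>
     (let N = 2 ^ n in
       \<comment> \<open>it is a map on N x N matrices: output block depends only on input block\<close>
       (\<forall>X Y. (\<forall>i<N. \<forall>j<N. X i j = Y i j) \<longrightarrow> (\<forall>i<N. \<forall>j<N. \<Phi> X i j = \<Phi> Y i j)) \<and>
       \<comment> \<open>linearity\<close>
       (\<forall>X Y (a::complex). \<forall>i<N. \<forall>j<N.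
           \<Phi> (\<lambda>p q. a * X p q + Y p q) i j = a * \<Phi> X i j + \<Phi> Y i j) \<and>
       \<comment> \<open>complete positivity\<close>
       (\<forall>k X. psd (k * N) X \<longrightarrow> psd (k * N) (id_tensor N k \<Phi> X)) \<and>
       \<comment> \<open>trace preservation\<close>
       (\<forall>X. (\<Sum>i<N. \<Phi> X i i) = (\<Sum>i<N. X i i)))"

text \<open>Convex hull of a set of channels (equality of maps on N x N matrices).\<close>
definition conv_ch :: "nat \<Rightarrow> superop set \<Rightarrow> superop set" where
  "conv_ch n Ocal = {\<Phi>. \<exists>(k::nat) (p::nat \<Rightarrow> real) \<Phi>s.
      (\<forall>l<k. \<Phi>s l \<in> Ocal \<and> 0 \<le> p l) \<and> (\<Sum>l<k. p l) = 1 \<and>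
      (\<forall>X. \<forall>i<2^n. \<forall>j<2^n. \<Phi> X i j = (\<Sum>l<k. complex_of_real (p l) * \<Phi>s l X i j))}"

text \<open>Free robustness (value \<infinity> when the defining set is empty).\<close>
definition free_robustness :: "nat \<Rightarrow> superop set \<Rightarrow> superop \<Rightarrow> ereal" where
  "free_robustness n Ocal \<Psi> = Inf (ereal ` {lam::real. 0 \<le> lam \<and> (\<exists>\<Phi>\<in>conv_ch n Ocal.
       (\<lambda>X i j. (\<Psi> X i j + complex_of_real lam * \<Phi> X i j) / (1 + complex_of_real lam))
         \<in> conv_ch n Ocal)})"

text \<open>Computational basis states |x> of n qubits, x in F_2^n, are encoded by their
index x < 2^n.\<close>
definition ket_proj :: "nat \<Rightarrow> cmat" where
  "ket_proj x = (\<lambda>i j. if i = x \<and> j = x then 1 else 0)"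

text \<open>f_Phi(x,y) = Tr[Phi(|x><x|) |y><y|] = (Phi(|x><x|))_{yy}.\<close>
definition f_ch :: "superop \<Rightarrow> nat \<times> nat \<Rightarrow> real" where
  "f_ch \<Phi> z = Re (\<Phi> (ket_proj (fst z)) (snd z) (snd z))"

definition F_cls :: "superop set \<Rightarrow> (nat \<times> nat \<Rightarrow> real) set" where
  "F_cls Ocal = f_ch ` Ocal"

definition gauss_m :: "nat \<Rightarrow> (nat \<Rightarrow> real) measure" where
  "gauss_m m = PiM {..<m} (\<lambda>_. density lborel std_normal_density)"

definition emp_gauss :: "nat \<Rightarrow> (nat \<Rightarrow> 'z) \<Rightarrow> ('z \<Rightarrow> real) set \<Rightarrow> real" where
  "emp_gauss m z G = (\<integral>g. (SUP h\<in>G. (1 / real m) * (\<Sum>i<m. g i * h (z i))) \<partial>gauss_m m)"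

definition exp_gauss :: "nat \<Rightarrow> 'z pmf \<Rightarrow> ('z \<Rightarrow> real) set \<Rightarrow> real" where
  "exp_gauss m D G = (\<integral>z. emp_gauss m z G \<partial>(PiM {..<m} (\<lambda>_. measure_pmf D)))"

end

theory Submission
  imports Defs
begin

text \<open>Every f_Phi of a channel takes values in [0,1] on basis states, so the Gaussian
suprema are dominated by (1/m) sum_i |g_i| and are integrable; their measurability comes
from a countable subclass that is dense on the sample. Enlarging the class can only
increase the supremum. For the upper bound take lambda in the robustness set with
witnesses Phi and Phi' = (Psi + lambda Phi)/(1 + lambda) in Conv(O). Then
f_Psi = (1 + lambda) f_Phi' - lambda f_Phi, and the correlation of g with the f of any
channel in Conv(O) is dominated by the supremum over F(O), being a convex combination of
correlations with members of F(O). Hence the supremum over F(O \<union> {Psi}) is at most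
(1 + lambda) times the one over F(O) minus lambda times the correlation with f_Phi, whose
Gaussian mean is zero. Taking the infimum over lambda and then integrating over the
sample gives both statements.\<close>

section \<open>Gaussian correlations\<close>

abbreviation std_gauss :: "real measure" where
  "std_gauss \<equiv> density lborel std_normal_density"

lemma prob_space_std_gauss: "prob_space std_gauss"
  using prob_space_normal_density by simp

lemma integrable_std_gauss_id: "integrable std_gauss (\<lambda>x. x)"
proof -
  have "integrable lborel (\<lambda>x. std_normal_density x *\<^sub>R x)"
    using integrable_std_normal_moment[of 1] by simp
  then show ?thesis
    by (subst integrable_density) (simp_all add: normal_density_nonneg)
qed

lemma integral_std_gauss_id: "integral\<^sup>L std_gauss (\<lambda>x. x) = 0"
proof -
  have "integral\<^sup>L std_gauss (\<lambda>x. x) = integral\<^sup>L lborel (\<lambda>x. std_normal_density x *\<^sub>R x)"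
    by (subst integral_density) (simp_all add: normal_density_nonneg)
  also have "\<dots> = 0"
    using integral_std_normal_moment_odd[of 0] by simp
  finally show ?thesis .
qed

lemma measurable_gauss_m_component:
  "i < m \<Longrightarrow> (\<lambda>g. g i) \<in> measurable (gauss_m m) std_gauss"
  unfolding gauss_m_def by (intro measurable_component_singleton) auto

lemma borel_measurable_gauss_m_component:
  "i < m \<Longrightarrow> (\<lambda>g. g i) \<in> borel_measurable (gauss_m m)"
  using measurable_gauss_m_component measurable_cong_sets[OF refl, of std_gauss borel]
  by (metis sets_density sets_lborel)

lemma
  assumes "i < m"
  shows integrable_gauss_m_component: "integrable (gauss_m m) (\<lambda>g. g i)"
    and integral_gauss_m_component: "integral\<^sup>L (gauss_m m) (\<lambda>g. g i) = 0"
proof -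
  have distr: "distr (gauss_m m) std_gauss (\<lambda>g. g i) = std_gauss"
    unfolding gauss_m_def using assms prob_space_std_gauss
    by (intro distr_PiM_component) auto
  note meas = measurable_gauss_m_component[OF assms]
  have id: "(\<lambda>x::real. x) \<in> borel_measurable std_gauss"
    by simp
  show "integrable (gauss_m m) (\<lambda>g. g i)"
    using integrable_distr_eq[OF meas id] distr integrable_std_gauss_id by simp
  show "integral\<^sup>L (gauss_m m) (\<lambda>g. g i) = 0"
    using integral_distr[OF meas id] distr integral_std_gauss_id by simp
qed

definition gauss_corr :: "nat \<Rightarrow> (nat \<Rightarrow> 'z) \<Rightarrow> ('z \<Rightarrow> real) \<Rightarrow> (nat \<Rightarrow> real) \<Rightarrow> real" where
  "gauss_corr m z h g = (1 / real m) * (\<Sum>i<m. g i * h (z i))"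

lemma emp_gauss_altdef:
  "emp_gauss m z G = integral\<^sup>L (gauss_m m) (\<lambda>g. SUP h\<in>G. gauss_corr m z h g)"
  by (simp add: emp_gauss_def gauss_corr_def)

lemma gauss_corr_cong:
  "(\<And>i. i < m \<Longrightarrow> h (z i) = h' (z i)) \<Longrightarrow> gauss_corr m z h g = gauss_corr m z h' g"
  unfolding gauss_corr_def by (intro arg_cong[where f = "(*) _"] sum.cong) auto

lemma gauss_corr_diff:
  "gauss_corr m z (\<lambda>w. a * h w - b * h' w) g = a * gauss_corr m z h g - b * gauss_corr m z h' g"
  unfolding gauss_corr_def
  by (simp add: sum_subtractf sum_distrib_left algebra_simps)

lemma borel_measurable_gauss_corr: "gauss_corr m z h \<in> borel_measurable (gauss_m m)"
  unfolding gauss_corr_def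
  by (intro borel_measurable_times borel_measurable_const borel_measurable_sum)
     (auto intro: borel_measurable_gauss_m_component)

lemma
  shows integrable_gauss_corr: "integrable (gauss_m m) (gauss_corr m z h)"
    and integral_gauss_corr: "integral\<^sup>L (gauss_m m) (gauss_corr m z h) = 0"
proof -
  have terms: "integrable (gauss_m m) (\<lambda>g. g i * h (z i))" if "i \<in> {..<m}" for i
    using integrable_gauss_m_component[of i m] that by (intro integrable_mult_left) auto
  show "integrable (gauss_m m) (gauss_corr m z h)"
    unfolding gauss_corr_def using terms by (intro integrable_mult_right integrable_sum) auto
  show "integral\<^sup>L (gauss_m m) (gauss_corr m z h) = 0"
    unfolding gauss_corr_def using terms by (simp add: integral_sum integral_gauss_m_component)
qed

lemma abs_gauss_corr_diff_le:
  "\<bar>gauss_corr m z h g - gauss_corr m z h' g\<bar>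
     \<le> (1 / real m) * (\<Sum>i<m. \<bar>g i\<bar> * \<bar>h (z i) - h' (z i)\<bar>)"
proof -
  have "gauss_corr m z h g - gauss_corr m z h' g = (1 / real m) * (\<Sum>i<m. g i * (h (z i) - h' (z i)))"
    unfolding gauss_corr_def by (simp add: sum_subtractf algebra_simps)
  also have "\<bar>\<dots>\<bar> \<le> (1 / real m) * (\<Sum>i<m. \<bar>g i\<bar> * \<bar>h (z i) - h' (z i)\<bar>)"
    using sum_abs[of "\<lambda>i. g i * (h (z i) - h' (z i))" "{..<m}"]
    by (simp add: abs_mult divide_right_mono)
  finally show ?thesis .
qed

lemma abs_gauss_corr_le:
  assumes "\<forall>i<m. \<bar>h (z i)\<bar> \<le> 1"
  shows "\<bar>gauss_corr m z h g\<bar> \<le> (1 / real m) * (\<Sum>i<m. \<bar>g i\<bar>)"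
proof -
  have "\<bar>gauss_corr m z h g\<bar> \<le> (1 / real m) * (\<Sum>i<m. \<bar>g i\<bar> * \<bar>h (z i)\<bar>)"
    using abs_gauss_corr_diff_le[of m z h g "\<lambda>_. 0"] by (simp add: gauss_corr_def)
  also have "\<dots> \<le> (1 / real m) * (\<Sum>i<m. \<bar>g i\<bar>)"
    using assms by (intro mult_left_mono sum_mono) (auto intro: mult_left_le)
  finally show ?thesis .
qed

lemma gauss_corr_le:
  assumes "\<forall>i<m. \<bar>h (z i)\<bar> \<le> 1"
  shows "gauss_corr m z h g \<le> (1 / real m) * (\<Sum>i<m. \<bar>g i\<bar>)"
  using abs_gauss_corr_le[of m h z g] assms by (simp add: abs_le_iff)

lemma bdd_above_gauss_corr:
  assumes "\<forall>h\<in>G. \<forall>i<m. \<bar>h (z i)\<bar> \<le> 1"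
  shows "bdd_above ((\<lambda>h. gauss_corr m z h g) ` G)"
  using assms by (intro bdd_aboveI2[where M = "(1 / real m) * (\<Sum>i<m. \<bar>g i\<bar>)"] gauss_corr_le) auto

lemma countable_subset_dense_image:
  fixes v :: "'a \<Rightarrow> 'b::second_countable_topology"
  obtains D where "countable D" "D \<subseteq> G"
    "\<And>h U. h \<in> G \<Longrightarrow> open U \<Longrightarrow> v h \<in> U \<Longrightarrow> \<exists>d\<in>D. v d \<in> U"
proof -
  obtain B :: "'b set set" where B: "countable B" "topological_basis B"
    using ex_countable_basis by blast
  define hit where "hit = {b\<in>B. \<exists>h\<in>G. v h \<in> b}"
  define pick where "pick b = (SOME h. h \<in> G \<and> v h \<in> b)" for b
  have pick: "pick b \<in> G \<and> v (pick b) \<in> b" if "b \<in> hit" for b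
  proof -
    have "\<exists>h. h \<in> G \<and> v h \<in> b"
      using that by (auto simp: hit_def)
    then show ?thesis
      unfolding pick_def by (rule someI_ex)
  qed
  show thesis
  proof (rule that)
    show "countable (pick ` hit)"
      using B(1) by (simp add: hit_def)
    show "pick ` hit \<subseteq> G"
      using pick by blast
    fix h U assume "h \<in> G" "open U" "v h \<in> U"
    then obtain b where "b \<in> B" "v h \<in> b" "b \<subseteq> U"
      using topological_basisE[OF B(2)] by metis
    then have "b \<in> hit"
      using \<open>h \<in> G\<close> by (auto simp: hit_def)
    then show "\<exists>d\<in>pick ` hit. v d \<in> U"
      using pick \<open>b \<subseteq> U\<close> by blast
  qed
qed

lemma countable_subclass_approx_on_sample:
  fixes G :: "('z \<Rightarrow> real) set" and z :: "nat \<Rightarrow> 'z"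
  obtains D where "countable D" "D \<subseteq> G"
    "\<And>h \<delta>. h \<in> G \<Longrightarrow> 0 < \<delta> \<Longrightarrow> \<exists>d\<in>D. \<forall>i<m. \<bar>h (z i) - d (z i)\<bar> < \<delta>"
proof -
  obtain D where D: "countable D" "D \<subseteq> G"
    and dense: "\<And>h U. h \<in> G \<Longrightarrow> open U \<Longrightarrow> (\<lambda>i. h (z i)) \<in> U \<Longrightarrow> \<exists>d\<in>D. (\<lambda>i. d (z i)) \<in> U"
    using countable_subset_dense_image[of G "\<lambda>h (i::nat). h (z i)"] by blast
  show thesis
  proof (rule that[OF D])
    fix h \<delta> assume "h \<in> G" "0 < (\<delta>::real)"
    define U where "U = (\<Inter>i<m. {w :: nat \<Rightarrow> real. \<bar>w i - h (z i)\<bar> < \<delta>})"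
    have "open U"
      unfolding U_def
    proof (intro open_INT ballI)
      fix i
      have "continuous_on UNIV (\<lambda>w::nat\<Rightarrow>real. \<bar>w i - h (z i)\<bar>)"
        by (intro continuous_on_rabs continuous_on_diff continuous_on_const continuous_on_product_coordinates)
      then show "open {w::nat\<Rightarrow>real. \<bar>w i - h (z i)\<bar> < \<delta>}"
        by (rule open_Collect_less[OF _ continuous_on_const])
    qed simp
    moreover have "(\<lambda>i. h (z i)) \<in> U"
      using \<open>0 < \<delta>\<close> by (simp add: U_def)
    ultimately obtain d where "d \<in> D" "(\<lambda>i. d (z i)) \<in> U"
      using dense[OF \<open>h \<in> G\<close>] by blast
    then show "\<exists>d\<in>D. \<forall>i<m. \<bar>h (z i) - d (z i)\<bar> < \<delta>"
      by (auto simp: U_def abs_minus_commute)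
  qed
qed

lemma SUP_gauss_corr_eq_countable_subclass:
  fixes G :: "('z \<Rightarrow> real) set"
  assumes "G \<noteq> {}" and bounded: "\<forall>h\<in>G. \<forall>i<m. \<bar>h (z i)\<bar> \<le> 1"
  obtains D where "countable D" "D \<subseteq> G"
    "\<And>g. (SUP h\<in>G. gauss_corr m z h g) = (SUP h\<in>D. gauss_corr m z h g)"
proof -
  obtain D where D: "countable D" "D \<subseteq> G"
    and approx: "\<And>h \<delta>. h \<in> G \<Longrightarrow> 0 < \<delta> \<Longrightarrow> \<exists>d\<in>D. \<forall>i<m. \<bar>h (z i) - d (z i)\<bar> < \<delta>"
    using countable_subclass_approx_on_sample[where G = G and z = z and m = m] by blast
  obtain h0 where "h0 \<in> G"
    using \<open>G \<noteq> {}\<close> by blast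
  then have "D \<noteq> {}"
    using approx[of h0 1] by auto
  have bdd: "bdd_above ((\<lambda>h. gauss_corr m z h g) ` A)" if "A \<subseteq> G" for A g
    using bounded that by (intro bdd_above_gauss_corr) auto
  have "(SUP h\<in>G. gauss_corr m z h g) = (SUP h\<in>D. gauss_corr m z h g)" for g
  proof (rule antisym)
    define C where "C = (1 / real m) * (\<Sum>i<m. \<bar>g i\<bar>) + 1"
    have "0 \<le> (1 / real m) * (\<Sum>i<m. \<bar>g i\<bar>)"
      by (simp add: sum_nonneg)
    then have "0 < C"
      unfolding C_def by linarith
    show "(SUP h\<in>G. gauss_corr m z h g) \<le> (SUP h\<in>D. gauss_corr m z h g)"
    proof (rule cSUP_least[OF \<open>G \<noteq> {}\<close>], rule field_le_epsilon)
      fix h e assume "h \<in> G" "0 < (e::real)"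
      then obtain d where "d \<in> D" and close: "\<forall>i<m. \<bar>h (z i) - d (z i)\<bar> < e / C"
        using approx[of h "e / C"] \<open>0 < C\<close> by auto
      have "gauss_corr m z h g - gauss_corr m z d g \<le> \<bar>gauss_corr m z h g - gauss_corr m z d g\<bar>"
        by (rule abs_ge_self)
      also have "\<dots> \<le> (1 / real m) * (\<Sum>i<m. \<bar>g i\<bar> * \<bar>h (z i) - d (z i)\<bar>)"
        by (rule abs_gauss_corr_diff_le)
      also have "\<dots> \<le> (1 / real m) * (\<Sum>i<m. \<bar>g i\<bar> * (e / C))"
        using close by (intro mult_left_mono sum_mono) (auto intro: less_imp_le)
      also have "\<dots> = (C - 1) * (e / C)"
        by (simp only: C_def add_diff_cancel_right' sum_distrib_right mult.assoc)
      also have "\<dots> \<le> e"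
        using \<open>0 < C\<close> \<open>0 < e\<close> by (simp add: field_simps)
      finally show "gauss_corr m z h g \<le> (SUP h\<in>D. gauss_corr m z h g) + e"
        using cSUP_upper[OF \<open>d \<in> D\<close> bdd[OF D(2), of g]] by linarith
    qed
    show "(SUP h\<in>D. gauss_corr m z h g) \<le> (SUP h\<in>G. gauss_corr m z h g)"
      by (rule cSUP_subset_mono[OF \<open>D \<noteq> {}\<close> bdd[OF order_refl] D(2)]) simp
  qed
  then show thesis
    using that[OF D] by blast
qed

lemma borel_measurable_SUP_gauss_corr:
  fixes G :: "('z \<Rightarrow> real) set"
  assumes "G \<noteq> {}" and "\<forall>h\<in>G. \<forall>i<m. \<bar>h (z i)\<bar> \<le> 1"
  shows "(\<lambda>g. SUP h\<in>G. gauss_corr m z h g) \<in> borel_measurable (gauss_m m)"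
proof -
  obtain D where "countable D" "D \<subseteq> G"
    and eq: "\<And>g. (SUP h\<in>G. gauss_corr m z h g) = (SUP h\<in>D. gauss_corr m z h g)"
    using SUP_gauss_corr_eq_countable_subclass[OF assms] by metis
  have "(\<lambda>g. SUP h\<in>D. gauss_corr m z h g) \<in> borel_measurable (gauss_m m)"
    using \<open>D \<subseteq> G\<close> assms(2)
    by (intro borel_measurable_cSUP[OF \<open>countable D\<close> borel_measurable_gauss_corr] bdd_above_gauss_corr) auto
  then show ?thesis
    by (simp only: eq)
qed

lemma integrable_SUP_gauss_corr:
  fixes G :: "('z \<Rightarrow> real) set"
  assumes "G \<noteq> {}" and bounded: "\<forall>h\<in>G. \<forall>i<m. \<bar>h (z i)\<bar> \<le> 1"
  shows "integrable (gauss_m m) (\<lambda>g. SUP h\<in>G. gauss_corr m z h g)"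
proof (rule Bochner_Integration.integrable_bound)
  show "integrable (gauss_m m) (\<lambda>g. (1 / real m) * (\<Sum>i<m. \<bar>g i\<bar>))"
    using integrable_gauss_m_component
    by (intro integrable_mult_right integrable_sum integrable_abs) auto
  show "(\<lambda>g. SUP h\<in>G. gauss_corr m z h g) \<in> borel_measurable (gauss_m m)"
    using borel_measurable_SUP_gauss_corr[OF assms] .
  obtain h0 where "h0 \<in> G"
    using \<open>G \<noteq> {}\<close> by blast
  show "AE g in gauss_m m. norm (SUP h\<in>G. gauss_corr m z h g) \<le> norm ((1 / real m) * (\<Sum>i<m. \<bar>g i\<bar>))"
  proof (rule AE_I2)
    fix g
    have upper: "(SUP h\<in>G. gauss_corr m z h g) \<le> (1 / real m) * (\<Sum>i<m. \<bar>g i\<bar>)"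
      using bounded by (intro cSUP_least[OF \<open>G \<noteq> {}\<close>] gauss_corr_le) auto
    have "gauss_corr m z h0 g \<le> (SUP h\<in>G. gauss_corr m z h g)"
      using \<open>h0 \<in> G\<close> bdd_above_gauss_corr[OF bounded] by (rule cSUP_upper)
    moreover have "- ((1 / real m) * (\<Sum>i<m. \<bar>g i\<bar>)) \<le> gauss_corr m z h0 g"
      using abs_gauss_corr_le[of m h0 z g] \<open>h0 \<in> G\<close> bounded by auto
    ultimately show "norm (SUP h\<in>G. gauss_corr m z h g) \<le> norm ((1 / real m) * (\<Sum>i<m. \<bar>g i\<bar>))"
      using upper by auto
  qed
qed

lemma emp_gauss_nonneg:
  assumes "G \<noteq> {}" and "\<forall>h\<in>G. \<forall>i<m. \<bar>h (z i)\<bar> \<le> 1"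
  shows "0 \<le> emp_gauss m z G"
proof -
  obtain h0 where "h0 \<in> G"
    using assms(1) by blast
  have "0 = integral\<^sup>L (gauss_m m) (gauss_corr m z h0)"
    by (simp add: integral_gauss_corr)
  also have "\<dots> \<le> emp_gauss m z G"
    unfolding emp_gauss_altdef
    using \<open>h0 \<in> G\<close> bdd_above_gauss_corr[OF assms(2)]
    by (intro integral_mono[OF integrable_gauss_corr integrable_SUP_gauss_corr[OF assms]] cSUP_upper)
  finally show ?thesis .
qed

lemma emp_gauss_mono:
  assumes "G \<noteq> {}" "G \<subseteq> G'" and bounded: "\<forall>h\<in>G'. \<forall>i<m. \<bar>h (z i)\<bar> \<le> 1"
  shows "emp_gauss m z G \<le> emp_gauss m z G'"
proof -
  have "G' \<noteq> {}" "\<forall>h\<in>G. \<forall>i<m. \<bar>h (z i)\<bar> \<le> 1"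
    using assms by auto
  then show ?thesis
    unfolding emp_gauss_altdef
    using assms bdd_above_gauss_corr[OF bounded]
    by (intro integral_mono integrable_SUP_gauss_corr cSUP_subset_mono) auto
qed

lemma gauss_corr_convex_comb_le_SUP:
  assumes "\<forall>l<k. hs l \<in> G \<and> 0 \<le> p l" "(\<Sum>l<k. p l) = 1"
    and "\<forall>i<m. h (z i) = (\<Sum>l<k. p l * hs l (z i))"
    and bdd: "bdd_above ((\<lambda>h. gauss_corr m z h g) ` G)"
  shows "gauss_corr m z h g \<le> (SUP h\<in>G. gauss_corr m z h g)"
proof -
  have "gauss_corr m z h g = (1 / real m) * (\<Sum>i<m. g i * (\<Sum>l<k. p l * hs l (z i)))"
    unfolding gauss_corr_def using assms(3) by (intro arg_cong[where f = "(*) _"] sum.cong) auto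
  also have "\<dots> = (\<Sum>l<k. p l * gauss_corr m z (hs l) g)"
    unfolding gauss_corr_def sum_distrib_left
    by (subst sum.swap) (intro sum.cong refl, simp add: mult_ac)
  also have "\<dots> \<le> (\<Sum>l<k. p l * (SUP h\<in>G. gauss_corr m z h g))"
    using assms(1) cSUP_upper[OF _ bdd] by (intro sum_mono mult_left_mono) auto
  also have "\<dots> = (SUP h\<in>G. gauss_corr m z h g)"
    using assms(2) by (simp flip: sum_distrib_right)
  finally show ?thesis .
qed

lemma emp_gauss_insert_affine_le:
  fixes \<gamma> :: real
  assumes "G \<noteq> {}" and bounded: "\<forall>h\<in>insert f G. \<forall>i<m. \<bar>h (z i)\<bar> \<le> 1" and "0 \<le> \<gamma>"
    and affine: "\<forall>i<m. f (z i) = (1 + \<gamma>) * f1 (z i) - \<gamma> * f2 (z i)"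
    and f1: "\<And>g. gauss_corr m z f1 g \<le> (SUP h\<in>G. gauss_corr m z h g)"
    and f2: "\<And>g. gauss_corr m z f2 g \<le> (SUP h\<in>G. gauss_corr m z h g)"
  shows "emp_gauss m z (insert f G) \<le> (1 + \<gamma>) * emp_gauss m z G"
proof -
  define S where "S g = (SUP h\<in>G. gauss_corr m z h g)" for g
  have bounded_G: "\<forall>h\<in>G. \<forall>i<m. \<bar>h (z i)\<bar> \<le> 1"
    using bounded by auto
  have pointwise: "(SUP h\<in>insert f G. gauss_corr m z h g) \<le> (1 + \<gamma>) * S g - \<gamma> * gauss_corr m z f2 g"
    for g
  proof (rule cSUP_least)
    fix h assume "h \<in> insert f G"
    then consider "h = f" | "h \<in> G" by auto
    then show "gauss_corr m z h g \<le> (1 + \<gamma>) * S g - \<gamma> * gauss_corr m z f2 g"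
    proof cases
      case 1
      have "gauss_corr m z f g = gauss_corr m z (\<lambda>w. (1 + \<gamma>) * f1 w - \<gamma> * f2 w) g"
        using affine by (intro gauss_corr_cong) auto
      also have "\<dots> = (1 + \<gamma>) * gauss_corr m z f1 g - \<gamma> * gauss_corr m z f2 g"
        by (rule gauss_corr_diff)
      also have "\<dots> \<le> (1 + \<gamma>) * S g - \<gamma> * gauss_corr m z f2 g"
        using mult_left_mono[OF f1[of g], of "1 + \<gamma>"] \<open>0 \<le> \<gamma>\<close> by (simp add: S_def)
      finally show ?thesis
        using 1 by simp
    next
      case 2
      then have "gauss_corr m z h g \<le> S g"
        unfolding S_def using bdd_above_gauss_corr[OF bounded_G] by (rule cSUP_upper)
      then show ?thesis
        using mult_left_mono[OF f2[of g] \<open>0 \<le> \<gamma>\<close>] by (simp add: S_def algebra_simps)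
    qed
  qed simp
  have int_S: "integrable (gauss_m m) S"
    unfolding S_def using \<open>G \<noteq> {}\<close> bounded_G by (rule integrable_SUP_gauss_corr)
  have "emp_gauss m z (insert f G)
      \<le> integral\<^sup>L (gauss_m m) (\<lambda>g. (1 + \<gamma>) * S g - \<gamma> * gauss_corr m z f2 g)"
    unfolding emp_gauss_altdef using bounded int_S
    by (intro integral_mono pointwise integrable_SUP_gauss_corr integrable_gauss_corr
          Bochner_Integration.integrable_diff integrable_mult_right) auto
  also have "\<dots> = (1 + \<gamma>) * integral\<^sup>L (gauss_m m) S - \<gamma> * integral\<^sup>L (gauss_m m) (gauss_corr m z f2)"
    by (subst Bochner_Integration.integral_diff)
       (auto intro: integrable_mult_right int_S integrable_gauss_corr)
  also have "\<dots> = (1 + \<gamma>) * emp_gauss m z G"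
    by (simp add: integral_gauss_corr emp_gauss_altdef S_def[abs_def])
  finally show ?thesis .
qed

section \<open>Quantum channels and free robustness\<close>

lemma psd_diag:
  assumes "psd d M" "i < d"
  shows "M i i \<in> \<real> \<and> 0 \<le> Re (M i i)"
proof -
  let ?e = "\<lambda>a::nat. if a = i then 1 else (0::complex)"
  have "(\<Sum>a<d. \<Sum>b<d. cnj (?e a) * M a b * ?e b) = (\<Sum>a<d. if a = i then M i i else 0)"
    by (intro sum.cong refl) (simp add: if_distrib cong: if_cong)
  also have "\<dots> = M i i"
    using \<open>i < d\<close> by simp
  finally have "(\<Sum>a<d. \<Sum>b<d. cnj (?e a) * M a b * ?e b) = M i i" .
  then show ?thesis
    using spec[OF assms(1)[unfolded psd_def], of ?e] by simp
qed

lemma psd_ket_proj: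
  assumes "x < d"
  shows "psd d (ket_proj x)"
proof -
  have "(\<Sum>i<d. \<Sum>j<d. cnj (v i) * ket_proj x i j * v j) = of_real ((cmod (v x))\<^sup>2)"
    for v :: "nat \<Rightarrow> complex"
  proof -
    have "(\<Sum>i<d. \<Sum>j<d. cnj (v i) * ket_proj x i j * v j)
        = (\<Sum>i<d. \<Sum>j<d. if j = x then (if i = x then cnj (v x) * v x else 0) else 0)"
      by (intro sum.cong) (auto simp: ket_proj_def)
    also have "\<dots> = cnj (v x) * v x"
      using assms by simp
    finally show ?thesis
      unfolding complex_norm_square by (simp only: mult.commute)
  qed
  then show ?thesis
    unfolding psd_def by simp
qed

lemma f_ch_bounds:
  assumes "is_channel n \<Phi>" "x < 2 ^ n" "y < 2 ^ n"
  shows "0 \<le> f_ch \<Phi> (x, y) \<and> f_ch \<Phi> (x, y) \<le> 1"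
proof -
  define N :: nat where "N = 2 ^ n"
  have cp: "\<And>X. psd (1 * N) X \<Longrightarrow> psd (1 * N) (id_tensor N 1 \<Phi> X)"
    and tp: "\<And>X. (\<Sum>i<N. \<Phi> X i i) = (\<Sum>i<N. X i i)"
    using assms(1) unfolding is_channel_def N_def Let_def by blast+
  define \<rho> where "\<rho> = \<Phi> (ket_proj x)"
  have "psd N (id_tensor N 1 \<Phi> (ket_proj x))"
    using cp[of "ket_proj x"] psd_ket_proj[of x N] assms(2) by (simp add: N_def)
  moreover have "id_tensor N 1 \<Phi> (ket_proj x) i j = \<rho> i j" if "i < N" "j < N" for i j
    using that by (simp add: id_tensor_def \<rho>_def)
  ultimately have diag: "\<rho> i i \<in> \<real> \<and> 0 \<le> Re (\<rho> i i)" if "i < N" for i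
    using psd_diag that by metis
  have "(\<Sum>i<N. Re (\<rho> i i)) = Re (\<Sum>i<N. ket_proj x i i)"
    using arg_cong[OF tp[of "ket_proj x"], of Re] by (simp add: \<rho>_def)
  also have "\<dots> = 1"
    using assms(2) by (simp add: ket_proj_def N_def)
  finally have trace: "(\<Sum>i<N. Re (\<rho> i i)) = 1" .
  have "Re (\<rho> y y) \<le> (\<Sum>i<N. Re (\<rho> i i))"
    using assms(3) diag by (intro member_le_sum) (auto simp: N_def)
  then show ?thesis
    using diag[of y] assms(3) trace by (simp add: f_ch_def \<rho>_def N_def)
qed

lemma abs_F_cls_le_1:
  assumes "\<forall>\<Phi>\<in>Ocal. is_channel n \<Phi>" and "\<forall>i<m. fst (z i) < 2 ^ n \<and> snd (z i) < 2 ^ n"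
  shows "\<forall>h\<in>F_cls Ocal. \<forall>i<m. \<bar>h (z i)\<bar> \<le> 1"
  using assms f_ch_bounds[of n _ "fst (z _)" "snd (z _)"] by (fastforce simp: F_cls_def)

lemma f_ch_mixture:
  fixes \<gamma> :: real
  shows "f_ch (\<lambda>X i j. (\<Psi> X i j + of_real \<gamma> * \<Phi> X i j) / (1 + of_real \<gamma>)) w
    = (f_ch \<Psi> w + \<gamma> * f_ch \<Phi> w) / (1 + \<gamma>)"
proof -
  have "1 + complex_of_real \<gamma> = complex_of_real (1 + \<gamma>)"
    by simp
  then show ?thesis
    unfolding f_ch_def by (simp only: Re_divide_of_real) simp
qed

lemma gauss_corr_conv_ch_le_SUP:
  assumes "\<Phi> \<in> conv_ch n Ocal" "\<forall>i<m. snd (z i) < 2 ^ n"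
    and "bdd_above ((\<lambda>h. gauss_corr m z h g) ` F_cls Ocal)"
  shows "gauss_corr m z (f_ch \<Phi>) g \<le> (SUP h\<in>F_cls Ocal. gauss_corr m z h g)"
proof -
  obtain k :: nat and p \<Phi>s where "\<forall>l<k. \<Phi>s l \<in> Ocal \<and> 0 \<le> p l" "(\<Sum>l<k. p l) = 1"
    and mix: "\<forall>X. \<forall>i<2^n. \<forall>j<2^n. \<Phi> X i j = (\<Sum>l<k. complex_of_real (p l) * \<Phi>s l X i j)"
    using assms(1) unfolding conv_ch_def by blast
  moreover have "\<forall>i<m. f_ch \<Phi> (z i) = (\<Sum>l<k. p l * f_ch (\<Phi>s l) (z i))"
    using mix assms(2) by (simp add: f_ch_def)
  ultimately show ?thesis
    using assms(3) by (intro gauss_corr_convex_comb_le_SUP[where hs = "\<lambda>l. f_ch (\<Phi>s l)"])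
      (auto simp: F_cls_def)
qed

lemma emp_gauss_insert_robust_le:
  fixes \<gamma> :: real
  assumes "Ocal \<noteq> {}" "\<forall>\<Phi>\<in>Ocal. is_channel n \<Phi>" "is_channel n \<Psi>"
    and z: "\<forall>i<m. fst (z i) < 2 ^ n \<and> snd (z i) < 2 ^ n"
    and "0 \<le> \<gamma>" "\<Phi> \<in> conv_ch n Ocal"
    and mixture: "(\<lambda>X i j. (\<Psi> X i j + of_real \<gamma> * \<Phi> X i j) / (1 + of_real \<gamma>)) \<in> conv_ch n Ocal"
  shows "emp_gauss m z (F_cls (Ocal \<union> {\<Psi>})) \<le> (1 + \<gamma>) * emp_gauss m z (F_cls Ocal)"
proof -
  define \<Phi>' where "\<Phi>' = (\<lambda>X i j. (\<Psi> X i j + of_real \<gamma> * \<Phi> X i j) / (1 + of_real \<gamma>))"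
  have F_insert: "F_cls (Ocal \<union> {\<Psi>}) = insert (f_ch \<Psi>) (F_cls Ocal)"
    by (auto simp: F_cls_def)
  have bounded: "\<forall>h\<in>F_cls (Ocal \<union> {\<Psi>}). \<forall>i<m. \<bar>h (z i)\<bar> \<le> 1"
    using assms(2,3) z by (intro abs_F_cls_le_1) auto
  have bdd: "bdd_above ((\<lambda>h. gauss_corr m z h g) ` F_cls Ocal)" for g
    using bounded by (intro bdd_above_gauss_corr) (auto simp: F_cls_def)
  have snd_z: "\<forall>i<m. snd (z i) < 2 ^ n"
    using z by auto
  have "emp_gauss m z (insert (f_ch \<Psi>) (F_cls Ocal)) \<le> (1 + \<gamma>) * emp_gauss m z (F_cls Ocal)"
  proof (rule emp_gauss_insert_affine_le)
    show "F_cls Ocal \<noteq> {}"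
      using assms(1) by (simp add: F_cls_def)
    show "\<forall>h\<in>insert (f_ch \<Psi>) (F_cls Ocal). \<forall>i<m. \<bar>h (z i)\<bar> \<le> 1"
      using bounded by (simp only: F_insert)
    show "0 \<le> \<gamma>"
      by fact
    show "\<forall>i<m. f_ch \<Psi> (z i) = (1 + \<gamma>) * f_ch \<Phi>' (z i) - \<gamma> * f_ch \<Phi> (z i)"
      using f_ch_mixture[of \<Psi> \<gamma> \<Phi>] \<open>0 \<le> \<gamma>\<close> by (simp add: \<Phi>'_def field_simps)
    show "gauss_corr m z (f_ch \<Phi>') g \<le> (SUP h\<in>F_cls Ocal. gauss_corr m z h g)" for g
      using mixture[folded \<Phi>'_def] snd_z bdd by (rule gauss_corr_conv_ch_le_SUP)
    show "gauss_corr m z (f_ch \<Phi>) g \<le> (SUP h\<in>F_cls Ocal. gauss_corr m z h g)" for g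
      using \<open>\<Phi> \<in> conv_ch n Ocal\<close> snd_z bdd by (rule gauss_corr_conv_ch_le_SUP)
  qed
  then show ?thesis
    by (simp only: F_insert)
qed

lemma le_one_plus_Inf_mult:
  fixes A B :: real and \<Lambda> :: "real set"
  assumes "Inf (ereal ` \<Lambda>) < \<infinity>" and bound: "\<forall>l\<in>\<Lambda>. 0 \<le> l \<and> B \<le> (1 + l) * A"
    and "0 \<le> A"
  shows "B \<le> (1 + real_of_ereal (Inf (ereal ` \<Lambda>))) * A"
proof -
  have "\<Lambda> \<noteq> {}"
    using assms(1) by (auto simp: top_ereal_def)
  then obtain l0 where "l0 \<in> \<Lambda>"
    by blast
  have "0 \<le> Inf (ereal ` \<Lambda>)"
    using bound by (intro Inf_greatest) auto
  then obtain r where r: "Inf (ereal ` \<Lambda>) = ereal r"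
    using assms(1) by (cases "Inf (ereal ` \<Lambda>)") auto
  show ?thesis
  proof (cases "A = 0")
    case True
    then show ?thesis
      using bound \<open>l0 \<in> \<Lambda>\<close> by auto
  next
    case False
    then have "0 < A"
      using \<open>0 \<le> A\<close> by simp
    have "ereal ((B - A) / A) \<le> Inf (ereal ` \<Lambda>)"
    proof (rule Inf_greatest)
      fix x assume "x \<in> ereal ` \<Lambda>"
      then obtain l where "l \<in> \<Lambda>" "x = ereal l"
        by blast
      then show "ereal ((B - A) / A) \<le> x"
        using bound \<open>0 < A\<close> by (auto simp: pos_divide_le_eq algebra_simps)
    qed
    then show ?thesis
      using r \<open>0 < A\<close> by (simp add: pos_divide_le_eq algebra_simps)
  qed
qed

lemma emp_gauss_robustness_bounds:
  assumes "Ocal \<noteq> {}" "\<forall>\<Phi>\<in>Ocal. is_channel n \<Phi>" "is_channel n \<Psi>"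
    and "free_robustness n Ocal \<Psi> < \<infinity>"
    and z: "\<forall>i<m. fst (z i) < 2 ^ n \<and> snd (z i) < 2 ^ n"
  shows "emp_gauss m z (F_cls Ocal) \<le> emp_gauss m z (F_cls (Ocal \<union> {\<Psi>}))"
    and "emp_gauss m z (F_cls (Ocal \<union> {\<Psi>}))
          \<le> (1 + real_of_ereal (free_robustness n Ocal \<Psi>)) * emp_gauss m z (F_cls Ocal)"
proof -
  have bounded: "\<forall>h\<in>F_cls (Ocal \<union> {\<Psi>}). \<forall>i<m. \<bar>h (z i)\<bar> \<le> 1"
    using assms(2,3) z by (intro abs_F_cls_le_1) auto
  have "F_cls Ocal \<noteq> {}"
    using assms(1) by (simp add: F_cls_def)
  then show "emp_gauss m z (F_cls Ocal) \<le> emp_gauss m z (F_cls (Ocal \<union> {\<Psi>}))"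
    using bounded by (intro emp_gauss_mono) (auto simp: F_cls_def)
  have "0 \<le> emp_gauss m z (F_cls Ocal)"
    using \<open>F_cls Ocal \<noteq> {}\<close> bounded by (intro emp_gauss_nonneg) (auto simp: F_cls_def)
  then show "emp_gauss m z (F_cls (Ocal \<union> {\<Psi>}))
      \<le> (1 + real_of_ereal (free_robustness n Ocal \<Psi>)) * emp_gauss m z (F_cls Ocal)"
    using assms(4) emp_gauss_insert_robust_le[OF assms(1-3) z]
    unfolding free_robustness_def by (intro le_one_plus_Inf_mult) auto
qed

section \<open>Expectation over i.i.d. samples\<close>

lemma borel_measurable_PiM_measure_pmf:
  fixes D :: "'a::countable pmf" and f :: "(nat \<Rightarrow> 'a) \<Rightarrow> real"
  shows "f \<in> borel_measurable (PiM {..<m} (\<lambda>_. measure_pmf D))"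
proof (rule measurableI)
  let ?P = "PiM {..<m} (\<lambda>_. measure_pmf D)"
  fix S :: "real set"
  have "countable (PiE {..<m} (\<lambda>_. UNIV :: 'a set))"
    by (rule countable_PiE) auto
  moreover have "f -` S \<inter> space ?P \<subseteq> PiE {..<m} (\<lambda>_. UNIV)"
    by (auto simp: space_PiM)
  ultimately have "countable (f -` S \<inter> space ?P)"
    using countable_subset by blast
  then show "f -` S \<inter> space ?P \<in> sets ?P"
  proof (rule sets.countable[rotated])
    fix a assume "a \<in> f -` S \<inter> space ?P"
    then have "{a} = PiE {..<m} (\<lambda>i. {a i})"
      by (intro PiE_singleton[symmetric]) (auto simp: space_PiM PiE_iff)
    also have "\<dots> \<in> sets ?P"
      by (rule sets_PiM_I_finite) auto
    finally show "{a} \<in> sets ?P" .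
  qed
qed simp

lemma AE_PiM_measure_pmf_in_support:
  fixes D :: "'a pmf" and m :: nat
  shows "AE z in PiM {..<m} (\<lambda>_. measure_pmf D). z \<in> PiE {..<m} (\<lambda>_. set_pmf D)"
proof -
  let ?P = "PiM {..<m} (\<lambda>_. measure_pmf D)"
  have "AE z in ?P. z i \<in> set_pmf D" if "i < m" for i
  proof -
    have meas: "(\<lambda>z. z i) \<in> measurable ?P (measure_pmf D)"
      using that by (intro measurable_component_singleton) auto
    have distr: "distr ?P (measure_pmf D) (\<lambda>z. z i) = measure_pmf D"
      using that by (intro distr_PiM_component) (auto intro: measure_pmf.prob_space_axioms)
    have "AE x in distr ?P (measure_pmf D) (\<lambda>z. z i). x \<in> set_pmf D"
      unfolding distr by (rule AE_measure_pmf)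
    then show ?thesis
      by (subst (asm) AE_distr_iff[OF meas]) auto
  qed
  then have "AE z in ?P. \<forall>i\<in>{..<m}. z i \<in> set_pmf D"
    by (intro AE_finite_allI) auto
  then show ?thesis
    using AE_space[of ?P] by eventually_elim (auto simp: space_PiM PiE_iff)
qed

lemma integral_PiM_measure_pmf_mono:
  fixes D :: "'a::countable pmf" and f g :: "(nat \<Rightarrow> 'a) \<Rightarrow> real"
  assumes "finite (set_pmf D)" and le: "\<And>z. z \<in> PiE {..<m} (\<lambda>_. set_pmf D) \<Longrightarrow> f z \<le> g z"
  shows "integral\<^sup>L (PiM {..<m} (\<lambda>_. measure_pmf D)) f \<le> integral\<^sup>L (PiM {..<m} (\<lambda>_. measure_pmf D)) g"
proof -
  let ?P = "PiM {..<m} (\<lambda>_. measure_pmf D)"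
  let ?Z = "PiE {..<m} (\<lambda>_. set_pmf D)"
  interpret P: prob_space ?P
    by (intro prob_space_PiM measure_pmf.prob_space_axioms)
  have "finite ?Z"
    using assms(1) by (intro finite_PiE) auto
  have integrable: "integrable ?P h" for h :: "(nat \<Rightarrow> 'a) \<Rightarrow> real"
  proof (rule P.integrable_const_bound[where B = "\<Sum>w\<in>?Z. \<bar>h w\<bar>"])
    show "AE z in ?P. norm (h z) \<le> (\<Sum>w\<in>?Z. \<bar>h w\<bar>)"
      using AE_PiM_measure_pmf_in_support[where D = D and m = m]
    proof eventually_elim
      case (elim z)
      then show ?case
        using \<open>finite ?Z\<close> member_le_sum[of z ?Z "\<lambda>w. \<bar>h w\<bar>"] by simp
    qed
  qed (rule borel_measurable_PiM_measure_pmf)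
  show ?thesis
    using AE_PiM_measure_pmf_in_support[where D = D and m = m] le
    by (intro integral_mono_AE integrable) (auto elim: eventually_mono)
qed

lemma exp_gauss_le_of_samples:
  fixes D :: "'z::countable pmf"
  assumes "finite (set_pmf D)"
    and "\<And>z. z \<in> PiE {..<m} (\<lambda>_. set_pmf D) \<Longrightarrow> emp_gauss m z G \<le> c * emp_gauss m z G'"
  shows "exp_gauss m D G \<le> c * exp_gauss m D G'"
proof -
  have "exp_gauss m D G \<le> integral\<^sup>L (PiM {..<m} (\<lambda>_. measure_pmf D)) (\<lambda>z. c * emp_gauss m z G')"
    unfolding exp_gauss_def using assms by (rule integral_PiM_measure_pmf_mono)
  then show ?thesis
    by (simp add: exp_gauss_def)
qed

theorem mainTheorem10:
  fixes n :: nat and Ocal :: "superop set" and \<Psi> :: superop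
  assumes "Ocal \<noteq> {}"
    and "\<forall>\<Phi>\<in>Ocal. is_channel n \<Phi>"
    and "is_channel n \<Psi>"
    and "free_robustness n Ocal \<Psi> < \<infinity>"
  shows "(\<forall>(m::nat) (z :: nat \<Rightarrow> nat \<times> nat).
            (\<forall>i<m. fst (z i) < 2^n \<and> snd (z i) < 2^n) \<longrightarrow>
            emp_gauss m z (F_cls Ocal) \<le> emp_gauss m z (F_cls (Ocal \<union> {\<Psi>})) \<and>
            emp_gauss m z (F_cls (Ocal \<union> {\<Psi>}))
              \<le> (1 + real_of_ereal (free_robustness n Ocal \<Psi>)) * emp_gauss m z (F_cls Ocal))
       \<and> (\<forall>(m::nat) (D :: (nat \<times> nat) pmf).
            set_pmf D \<subseteq> {..<2^n} \<times> {..<2^n} \<longrightarrow>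
            exp_gauss m D (F_cls Ocal) \<le> exp_gauss m D (F_cls (Ocal \<union> {\<Psi>})) \<and>
            exp_gauss m D (F_cls (Ocal \<union> {\<Psi>}))
              \<le> (1 + real_of_ereal (free_robustness n Ocal \<Psi>)) * exp_gauss m D (F_cls Ocal))"
proof -
  let ?c = "1 + real_of_ereal (free_robustness n Ocal \<Psi>)"
  have sample: "emp_gauss m z (F_cls Ocal) \<le> 1 * emp_gauss m z (F_cls (Ocal \<union> {\<Psi>}))"
      "emp_gauss m z (F_cls (Ocal \<union> {\<Psi>})) \<le> ?c * emp_gauss m z (F_cls Ocal)"
    if "\<forall>i<m. fst (z i) < 2^n \<and> snd (z i) < 2^n" for m z
    using emp_gauss_robustness_bounds[OF assms that] by simp_all
  have expected: "exp_gauss m D (F_cls Ocal) \<le> 1 * exp_gauss m D (F_cls (Ocal \<union> {\<Psi>}))"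
      "exp_gauss m D (F_cls (Ocal \<union> {\<Psi>})) \<le> ?c * exp_gauss m D (F_cls Ocal)"
    if D: "set_pmf D \<subseteq> {..<2^n} \<times> {..<2^n}" for m D
  proof -
    have fin: "finite (set_pmf D)"
      using D by (rule finite_subset) auto
    have in_range: "\<forall>i<m. fst (z i) < 2^n \<and> snd (z i) < 2^n"
      if "z \<in> PiE {..<m} (\<lambda>_. set_pmf D)" for z
      using that D by (force simp: PiE_iff)
    show "exp_gauss m D (F_cls Ocal) \<le> 1 * exp_gauss m D (F_cls (Ocal \<union> {\<Psi>}))"
      using fin by (rule exp_gauss_le_of_samples) (rule sample(1)[OF in_range])
    show "exp_gauss m D (F_cls (Ocal \<union> {\<Psi>})) \<le> ?c * exp_gauss m D (F_cls Ocal)"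
      using fin by (rule exp_gauss_le_of_samples) (rule sample(2)[OF in_range])
  qed
  show ?thesis
    using sample expected by simp
qed

end
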